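(* Let $\mathcal{A}$ be a finite or countable alphabet, $\mathcal{M}$ a countable set of probability measures on $\mathcal{A}^\infty$, $w:\mathcal{M}\to(0,1]$ a prior with $\sum_\nu w_\nu=1$, $\xi$ the Bayes mixture and $\mu\in\mathcal{M}$. For every $n\in\mathbb{N}$, both $\mathbb{E}_\mu\ln(\mu_{<n}/\xi_{<n})$ and $\mathbb{E}_\mu d_n$ exist and are finite.
   Context: $\mathcal{A}^\infty$ carries the $\sigma$-algebra generated by cylinders $\Gamma_x=\{x\omega\}$; for a measure $\rho$, $\rho(x):=\rho(\Gamma_x)$, $\rho(y|x):=\rho(xy)/\rho(x)$, and $\rho_{<t}(\omega):=\rho(\omega_{<t})$ with $\omega_{<t}=\omega_1\cdots\omega_{t-1}$. Bayes mixture $\xi(A):=\sum_\nu w_\nu\nu(A)$. Natural logs. $d_n(\omega):=\sum_{a\in\mathcal{A}}\mu(a|\omega_{<n})\ln\frac{\mu(a|\omega_{<n})}{\xi(a|\omega_{<n})}$. *)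

theory Defs
  imports "HOL-Probability.Probability"
begin

definition cyl :: "'a list \<Rightarrow> 'a stream set" where
  "cyl x = {\<omega>. stake (length x) \<omega> = x}"

definition cylp :: "'a stream measure \<Rightarrow> 'a list \<Rightarrow> real" where
  "cylp \<rho> x = measure \<rho> (cyl x)"

definition mixp :: "'a stream measure set \<Rightarrow> ('a stream measure \<Rightarrow> real) \<Rightarrow> 'a list \<Rightarrow> real" where
  "mixp M w x = (\<Sum>\<^sub>\<infinity>\<nu>\<in>M. w \<nu> * cylp \<nu> x)"

definition condp :: "('a list \<Rightarrow> real) \<Rightarrow> 'a \<Rightarrow> 'a list \<Rightarrow> real" where
  "condp f a x = f (x @ [a]) / f x"

text \<open>omega_{<n} = omega_1 ... omega_{n-1} (streams are 0-indexed in Isabelle).\<close>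
definition prefix_lt :: "nat \<Rightarrow> 'a stream \<Rightarrow> 'a list" where
  "prefix_lt n \<omega> = stake (n - 1) \<omega>"

definition dn :: "'a stream measure \<Rightarrow> 'a stream measure set \<Rightarrow> ('a stream measure \<Rightarrow> real)
    \<Rightarrow> nat \<Rightarrow> 'a stream \<Rightarrow> real" where
  "dn \<mu> M w n \<omega> = (\<Sum>\<^sub>\<infinity>a\<in>UNIV.
      condp (cylp \<mu>) a (prefix_lt n \<omega>) *
      ln (condp (cylp \<mu>) a (prefix_lt n \<omega>) / condp (mixp M w) a (prefix_lt n \<omega>)))"

end

theory Submission
  imports Defs
begin

text \<open>Both integrands are functions of the prefix \<open>\<omega>\<^sub><\<^sub>n\<close>, so their \<open>\<mu>\<close>-integrals are sums over
  strings \<open>x\<close> of length \<open>n - 1\<close> weighted by \<open>\<mu>(x)\<close>. Dominance \<open>w\<^sub>\<mu> \<mu>(x) \<le> \<xi>(x)\<close> and the inequality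
  \<open>ln t \<le> t - 1\<close> give \<open>\<bar>F x\<bar> \<mu>(x) \<le> (1 - ln w\<^sub>\<mu>) \<mu>(x) + \<xi>(x)\<close> for both integrands \<open>F\<close>; for \<open>d\<^sub>n\<close> this
  follows termwise after rescaling the ratio by \<open>\<xi>(x)/\<mu>(x)\<close>, using that the one-letter extensions
  of \<open>x\<close> carry at most the mass of \<open>x\<close> under \<open>\<mu>\<close> and \<open>\<xi>\<close>. Since \<open>\<mu>\<close> and \<open>\<xi>\<close> have total mass at most 1
  on strings of fixed length, the sum is finite.\<close>

subsection \<open>Real inequalities\<close>

lemma abs_mult_ln_ratio_le:
  fixes u v r c :: real
  assumes u: "0 < u" and v: "0 < v" and r: "0 < r" and c: "0 < c" "c \<le> 1" and dom: "c * u \<le> v"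
  shows "\<bar>u * ln ((u / v) * r)\<bar> \<le> u * (- ln c + r) + v / r"
proof (cases "1 \<le> (u / v) * r")
  case True
  have "ln (u / v) \<le> ln (1 / c)"
    using dom u v c by (simp add: field_simps)
  moreover have "ln r \<le> r"
    using ln_le_minus_one[OF r] by simp
  moreover have "ln ((u / v) * r) = ln (u / v) + ln r"
    using ln_mult[of "u / v" r] u v r by simp
  ultimately have "ln ((u / v) * r) \<le> - ln c + r"
    using c by (simp add: ln_div)
  moreover have "0 \<le> ln ((u / v) * r)"
    using True by simp
  ultimately have "\<bar>u * ln ((u / v) * r)\<bar> \<le> u * (- ln c + r)"
    using u by (simp add: abs_mult mult_left_mono)
  then show ?thesis
    using v r by (smt (verit) divide_pos_pos)
next
  case False
  have pos: "0 < (u / v) * r"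
    using u v r by simp
  have "- ln ((u / v) * r) = ln (1 / ((u / v) * r))"
    using pos by (simp add: ln_div)
  also have "\<dots> \<le> 1 / ((u / v) * r) - 1"
    using u v r by (intro ln_le_minus_one) simp
  finally have "u * (- ln ((u / v) * r)) \<le> u * (1 / ((u / v) * r) - 1)"
    by (rule mult_left_mono) (use u in simp)
  also have "\<dots> = v / r - u"
    using u v r by (simp add: field_simps)
  finally have "\<bar>u * ln ((u / v) * r)\<bar> \<le> v / r - u"
    using False pos u by (simp add: abs_mult)
  moreover have "0 \<le> - ln c + r"
    using ln_le_minus_one[OF c(1)] c(2) r by linarith
  then have "0 \<le> u * (- ln c + r)"
    using u by simp
  ultimately show ?thesis
    using u by linarith
qed

lemma abs_ln_ratio_mult_le:
  fixes p q c :: real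
  assumes "0 \<le> p" "0 < c" "c \<le> 1" "c * p \<le> q"
  shows "\<bar>ln (p / q)\<bar> * p \<le> (- ln c + 1) * p + q"
proof (cases "p = 0")
  case True
  then show ?thesis using assms by simp
next
  case False
  then have "0 < p" "0 < q"
    using assms by (auto intro: less_le_trans[of 0 "c * p"])
  then show ?thesis
    using abs_mult_ln_ratio_le[of p q 1 c] assms by (simp add: abs_mult algebra_simps)
qed

text \<open>One term of \<open>\<mu>(x) d(x)\<close> with \<open>p = \<mu>(x)\<close>, \<open>s = \<xi>(x)\<close>, \<open>u = \<mu>(xa)\<close>, \<open>v = \<xi>(xa)\<close>.\<close>

lemma abs_scaled_kl_term_le:
  fixes p s u v c :: real
  assumes p: "0 < p" and s: "0 < s" and u: "0 \<le> u" and c: "0 < c" "c \<le> 1" and dom: "c * u \<le> v"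
  shows "\<bar>p * (u / p * ln ((u / p) / (v / s)))\<bar> \<le> (- ln c + s / p) * u + (p / s) * v"
proof (cases "u = 0")
  case True
  have "0 \<le> v" using dom True by simp
  then show ?thesis using True p s by simp
next
  case False
  then have u: "0 < u" and v: "0 < v"
    using u dom c by (auto intro: less_le_trans[of 0 "c * u"])
  have ratio: "(u / p) / (v / s) = (u / v) * (s / p)"
    using p s v by (simp add: field_simps)
  have "p * (u / p * ln ((u / p) / (v / s))) = u * ln ((u / v) * (s / p))"
    using p by (simp only: ratio) simp
  moreover have "\<bar>u * ln ((u / v) * (s / p))\<bar> \<le> u * (- ln c + s / p) + v / (s / p)"
    by (rule abs_mult_ln_ratio_le) (use u v c dom p s in auto)
  ultimately show ?thesis
    by (simp add: algebra_simps)
qed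

subsection \<open>Sums over countable sets\<close>

lemma nn_integral_count_space_eq_infsum:
  fixes f :: "'b \<Rightarrow> real"
  assumes "f summable_on A" "\<And>x. x \<in> A \<Longrightarrow> 0 \<le> f x"
  shows "(\<integral>\<^sup>+x. ennreal (f x) \<partial>count_space A) = ennreal (infsum f A)"
proof -
  have "Infinite_Sum.abs_summable_on f A"
    using assms by (metis (no_types, lifting) real_norm_def abs_of_nonneg summable_on_cong)
  then have "Infinite_Set_Sum.abs_summable_on f A"
    by (rule abs_summable_equivalent[THEN iffD1])
  then show ?thesis
    using nn_integral_conv_infsetsum assms(2) infsetsum_infsum by metis
qed

lemma abs_infsum_le_if_nn_integral_le:
  fixes g h :: "'b \<Rightarrow> real"
  assumes gh: "\<And>a. a \<in> A \<Longrightarrow> \<bar>g a\<bar> \<le> h a"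
    and h: "(\<integral>\<^sup>+a. ennreal (h a) \<partial>count_space A) \<le> ennreal B" and B: "0 \<le> B"
  shows "\<bar>infsum g A\<bar> \<le> B"
proof -
  have "(\<integral>\<^sup>+a. ennreal (norm (g a)) \<partial>count_space A) \<le> (\<integral>\<^sup>+a. ennreal (h a) \<partial>count_space A)"
    using gh by (intro nn_integral_mono ennreal_leI) auto
  also note h
  finally have le: "(\<integral>\<^sup>+a. ennreal (norm (g a)) \<partial>count_space A) \<le> ennreal B" .
  then have int: "integrable (count_space A) g"
    by (intro integrableI_bounded) (auto simp: top.not_eq_extremum intro: le_less_trans)
  then have "infsum g A = integral\<^sup>L (count_space A) g"
    using infsetsum_infsum[of g A] by (simp add: abs_summable_on_def infsetsum_def)
  moreover have "ennreal (norm (integral\<^sup>L (count_space A) g)) \<le> ennreal B"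
    using integral_norm_bound_ennreal[OF int] le by (rule order.trans)
  ultimately show ?thesis
    using B by (simp add: ennreal_le_iff)
qed

lemma nn_integral_linear_combination_le:
  fixes f g :: "'b \<Rightarrow> real"
  assumes \<alpha>: "0 \<le> \<alpha>" and \<beta>: "0 \<le> \<beta>" and f: "\<And>x. 0 \<le> f x" and g: "\<And>x. 0 \<le> g x"
    and F: "0 \<le> F" "(\<integral>\<^sup>+x. ennreal (f x) \<partial>count_space A) \<le> ennreal F"
    and G: "0 \<le> G" "(\<integral>\<^sup>+x. ennreal (g x) \<partial>count_space A) \<le> ennreal G"
  shows "(\<integral>\<^sup>+x. ennreal (\<alpha> * f x + \<beta> * g x) \<partial>count_space A) \<le> ennreal (\<alpha> * F + \<beta> * G)"
proof -
  have "(\<integral>\<^sup>+x. ennreal (\<alpha> * f x + \<beta> * g x) \<partial>count_space A)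
      = (\<integral>\<^sup>+x. ennreal \<alpha> * ennreal (f x) + ennreal \<beta> * ennreal (g x) \<partial>count_space A)"
    using \<alpha> \<beta> f g by (intro nn_integral_cong) (simp add: ennreal_plus ennreal_mult)
  also have "\<dots> = ennreal \<alpha> * (\<integral>\<^sup>+x. ennreal (f x) \<partial>count_space A)
                 + ennreal \<beta> * (\<integral>\<^sup>+x. ennreal (g x) \<partial>count_space A)"
    by (simp add: nn_integral_add nn_integral_cmult)
  also have "\<dots> \<le> ennreal \<alpha> * ennreal F + ennreal \<beta> * ennreal G"
    using F G by (intro add_mono mult_left_mono) auto
  also have "\<dots> = ennreal (\<alpha> * F + \<beta> * G)"
    using \<alpha> \<beta> F G by (simp add: ennreal_plus ennreal_mult)
  finally show ?thesis .
qed

subsection \<open>The conditional relative entropy\<close>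

definition cond_kl :: "('a list \<Rightarrow> real) \<Rightarrow> ('a list \<Rightarrow> real) \<Rightarrow> 'a list \<Rightarrow> real" where
  "cond_kl p q x = (\<Sum>\<^sub>\<infinity>a\<in>UNIV. condp p a x * ln (condp p a x / condp q a x))"

lemma dn_eq_cond_kl: "dn \<mu> M w n \<omega> = cond_kl (cylp \<mu>) (mixp M w) (prefix_lt n \<omega>)"
  by (simp add: dn_def cond_kl_def)

lemma abs_cond_kl_mult_le:
  fixes p q :: "'a list \<Rightarrow> real"
  assumes p_nonneg: "\<And>y. 0 \<le> p y" and c: "0 < c" "c \<le> 1" and dom: "\<And>y. c * p y \<le> q y"
    and p_children: "(\<integral>\<^sup>+a. ennreal (p (x @ [a])) \<partial>count_space UNIV) \<le> ennreal (p x)"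
    and q_children: "(\<integral>\<^sup>+a. ennreal (q (x @ [a])) \<partial>count_space UNIV) \<le> ennreal (q x)"
  shows "\<bar>cond_kl p q x\<bar> * p x \<le> (- ln c + 1) * p x + q x"
proof (cases "p x = 0")
  case True
  then show ?thesis using dom[of x] by simp
next
  case False
  have q_nonneg: "0 \<le> q y" for y
    using dom[of y] p_nonneg[of y] c by (smt (verit) mult_nonneg_nonneg)
  have p: "0 < p x" using False p_nonneg[of x] by simp
  have s: "0 < q x" using dom[of x] p c by (smt (verit) mult_pos_pos)
  have weight: "0 \<le> - ln c + q x / p x"
    using ln_le_minus_one[OF c(1)] c(2) divide_pos_pos[OF s p] by linarith
  have "\<bar>infsum (\<lambda>a. p x * (condp p a x * ln (condp p a x / condp q a x))) UNIV\<bar>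
        \<le> (- ln c + q x / p x) * p x + (p x / q x) * q x"
  proof (rule abs_infsum_le_if_nn_integral_le)
    show "\<bar>p x * (condp p a x * ln (condp p a x / condp q a x))\<bar>
          \<le> (- ln c + q x / p x) * p (x @ [a]) + (p x / q x) * q (x @ [a])" for a
      unfolding condp_def using abs_scaled_kl_term_le[OF p s p_nonneg c dom] .
    show "(\<integral>\<^sup>+a. ennreal ((- ln c + q x / p x) * p (x @ [a]) + (p x / q x) * q (x @ [a])) \<partial>count_space UNIV)
          \<le> ennreal ((- ln c + q x / p x) * p x + (p x / q x) * q x)"
      using weight p s p_nonneg q_nonneg p_children q_children
      by (intro nn_integral_linear_combination_le) auto
    show "0 \<le> (- ln c + q x / p x) * p x + (p x / q x) * q x"
      by (rule add_nonneg_nonneg[OF mult_nonneg_nonneg[OF weight less_imp_le[OF p]]]) (use p s in simp)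
  qed
  moreover have "infsum (\<lambda>a. p x * (condp p a x * ln (condp p a x / condp q a x))) UNIV = p x * cond_kl p q x"
    unfolding cond_kl_def by (rule infsum_cmult_right')
  ultimately show ?thesis
    using p s by (simp add: abs_mult mult.commute algebra_simps)
qed

subsection \<open>Cylinders\<close>

lemma sets_cyl:
  fixes x :: "'a::countable list"
  assumes "sets \<nu> = sets (stream_space (count_space UNIV))"
  shows "cyl x \<in> sets \<nu>"
proof -
  have "stake (length x) -` {x} \<inter> space (stream_space (count_space UNIV))
        \<in> sets (stream_space (count_space (UNIV::'a set)))"
    by (rule measurable_sets[OF measurable_stake]) simp
  moreover have "stake (length x) -` {x} \<inter> space (stream_space (count_space UNIV)) = cyl x"
    by (auto simp: cyl_def space_stream_space)
  ultimately show ?thesis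
    using assms by simp
qed

lemma cyl_disjoint: "length x = length y \<Longrightarrow> x \<noteq> y \<Longrightarrow> cyl x \<inter> cyl y = {}"
  by (auto simp: cyl_def)

lemma cyl_append_subset: "cyl (x @ y) \<subseteq> cyl x"
proof
  fix \<omega> assume "\<omega> \<in> cyl (x @ y)"
  then have "take (length x) (stake (length x + length y) \<omega>) = x"
    by (simp add: cyl_def)
  then show "\<omega> \<in> cyl x"
    by (simp add: cyl_def take_stake)
qed

lemma nn_integral_stake:
  fixes h :: "'a::countable list \<Rightarrow> ennreal"
  assumes sets: "sets \<nu> = sets (stream_space (count_space UNIV))"
  shows "(\<integral>\<^sup>+\<omega>. h (stake k \<omega>) \<partial>\<nu>) = (\<integral>\<^sup>+x. h x * emeasure \<nu> (cyl x) \<partial>count_space {x. length x = k})"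
proof -
  have "h (stake k \<omega>) = (\<integral>\<^sup>+x. h x * indicator (cyl x) \<omega> \<partial>count_space {x. length x = k})" for \<omega>
    by (subst nn_integral_count_space'[where A="{stake k \<omega>}"]) (auto simp: cyl_def)
  then have "(\<integral>\<^sup>+\<omega>. h (stake k \<omega>) \<partial>\<nu>)
      = (\<integral>\<^sup>+\<omega>. (\<integral>\<^sup>+x. h x * indicator (cyl x) \<omega> \<partial>count_space {x. length x = k}) \<partial>\<nu>)"
    by simp
  also have "\<dots> = (\<integral>\<^sup>+x. (\<integral>\<^sup>+\<omega>. h x * indicator (cyl x) \<omega> \<partial>\<nu>) \<partial>count_space {x. length x = k})"
  proof (rule nn_integral_count_space_nn_integral)
    show "countable {x::'a list. length x = k}"
      by (rule countable_subset[OF subset_UNIV]) simp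
    fix x :: "'a list"
    have [measurable]: "cyl x \<in> sets \<nu>"
      by (rule sets_cyl[OF sets])
    show "(\<lambda>\<omega>. h x * indicator (cyl x) \<omega>) \<in> borel_measurable \<nu>"
      by measurable
  qed
  also have "\<dots> = (\<integral>\<^sup>+x. h x * emeasure \<nu> (cyl x) \<partial>count_space {x. length x = k})"
    by (simp add: nn_integral_cmult_indicator sets_cyl[OF sets])
  finally show ?thesis .
qed

lemma nn_integral_emeasure_disjoint_cyl_le:
  fixes g :: "'i \<Rightarrow> 'a::countable list"
  assumes sets: "sets \<nu> = sets (stream_space (count_space UNIV))" and I: "countable I"
    and disj: "\<And>i j. i \<in> I \<Longrightarrow> j \<in> I \<Longrightarrow> i \<noteq> j \<Longrightarrow> cyl (g i) \<inter> cyl (g j) = {}"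
    and sub: "\<And>i. i \<in> I \<Longrightarrow> cyl (g i) \<subseteq> C" and C: "C \<in> sets \<nu>"
  shows "(\<integral>\<^sup>+i. emeasure \<nu> (cyl (g i)) \<partial>count_space I) \<le> emeasure \<nu> C"
proof -
  have "(\<integral>\<^sup>+i. emeasure \<nu> (cyl (g i)) \<partial>count_space I) = emeasure \<nu> (\<Union>i\<in>I. cyl (g i))"
    by (rule emeasure_UN_countable[symmetric])
       (auto simp: I sets_cyl[OF sets] disjoint_family_on_def disj)
  also have "\<dots> \<le> emeasure \<nu> C"
    by (rule emeasure_mono) (use sub C in auto)
  finally show ?thesis .
qed

lemma countable_lists_of_length: "countable {x :: 'a::countable list. length x = k}"
  by (rule countable_subset[OF subset_UNIV]) simp

lemma nn_integral_emeasure_cyl_length_le: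
  fixes \<nu> :: "'a::countable stream measure"
  assumes sets: "sets \<nu> = sets (stream_space (count_space UNIV))"
  shows "(\<integral>\<^sup>+x. emeasure \<nu> (cyl x) \<partial>count_space {x. length x = k}) \<le> emeasure \<nu> (space \<nu>)"
proof -
  have "space \<nu> = UNIV"
    using sets_eq_imp_space_eq[OF sets] by (simp add: space_stream_space)
  then show ?thesis
    using nn_integral_emeasure_disjoint_cyl_le[OF sets countable_lists_of_length, where g = id]
      sets.top[of \<nu>]
    by (simp add: cyl_disjoint)
qed

lemma nn_integral_emeasure_cyl_snoc_le:
  fixes \<nu> :: "'a::countable stream measure"
  assumes sets: "sets \<nu> = sets (stream_space (count_space UNIV))"
  shows "(\<integral>\<^sup>+a. emeasure \<nu> (cyl (x @ [a])) \<partial>count_space UNIV) \<le> emeasure \<nu> (cyl x)"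
  using nn_integral_emeasure_disjoint_cyl_le[OF sets, where I = UNIV and g = "\<lambda>a. x @ [a]"]
  by (simp add: cyl_disjoint cyl_append_subset sets_cyl[OF sets])

lemma emeasure_cyl_eq_cylp: "prob_space \<nu> \<Longrightarrow> emeasure \<nu> (cyl x) = ennreal (cylp \<nu> x)"
  by (simp add: cylp_def finite_measure.emeasure_eq_measure prob_space.finite_measure)

lemma nn_integral_cylp_length_le_1:
  fixes \<nu> :: "'a::countable stream measure"
  assumes "prob_space \<nu>" "sets \<nu> = sets (stream_space (count_space UNIV))"
  shows "(\<integral>\<^sup>+x. ennreal (cylp \<nu> x) \<partial>count_space {x. length x = k}) \<le> 1"
  using nn_integral_emeasure_cyl_length_le[OF assms(2), of k]
  by (simp add: emeasure_cyl_eq_cylp[OF assms(1)] prob_space.emeasure_space_1[OF assms(1)])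

lemma nn_integral_cylp_snoc_le:
  fixes \<nu> :: "'a::countable stream measure"
  assumes "prob_space \<nu>" "sets \<nu> = sets (stream_space (count_space UNIV))"
  shows "(\<integral>\<^sup>+a. ennreal (cylp \<nu> (x @ [a])) \<partial>count_space UNIV) \<le> ennreal (cylp \<nu> x)"
  using nn_integral_emeasure_cyl_snoc_le[OF assms(2), of x] by (simp add: emeasure_cyl_eq_cylp[OF assms(1)])

lemma integrable_stake_if_dominated:
  fixes F q :: "'a::countable list \<Rightarrow> real"
  assumes \<mu>: "prob_space \<mu>" and sets: "sets \<mu> = sets (stream_space (count_space UNIV))"
    and C: "0 \<le> C" and q: "\<And>x. 0 \<le> q x"
    and q_total: "(\<integral>\<^sup>+x. ennreal (q x) \<partial>count_space {x. length x = k}) \<le> 1"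
    and bound: "\<And>x. \<bar>F x\<bar> * cylp \<mu> x \<le> C * cylp \<mu> x + q x"
  shows "integrable \<mu> (\<lambda>\<omega>. F (stake k \<omega>))"
proof (rule integrableI_bounded)
  have "(\<lambda>\<omega>. F (stake k \<omega>)) \<in> borel_measurable (stream_space (count_space UNIV))"
    by (rule measurable_compose[OF measurable_stake]) simp
  then show "(\<lambda>\<omega>. F (stake k \<omega>)) \<in> borel_measurable \<mu>"
    by (simp only: measurable_cong_sets[OF sets refl])
  have cylp: "0 \<le> cylp \<mu> x" for x
    by (simp add: cylp_def)
  have "(\<integral>\<^sup>+\<omega>. ennreal (norm (F (stake k \<omega>))) \<partial>\<mu>)
      = (\<integral>\<^sup>+x. ennreal (\<bar>F x\<bar> * cylp \<mu> x) \<partial>count_space {x. length x = k})"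
    using nn_integral_stake[OF sets, of "\<lambda>x. ennreal \<bar>F x\<bar>" k]
    by (simp add: emeasure_cyl_eq_cylp[OF \<mu>] ennreal_mult cylp)
  also have "\<dots> \<le> (\<integral>\<^sup>+x. ennreal (C * cylp \<mu> x + 1 * q x) \<partial>count_space {x. length x = k})"
    using bound by (intro nn_integral_mono ennreal_leI) simp
  also have "\<dots> \<le> ennreal (C * 1 + 1 * 1)"
    using C q cylp q_total nn_integral_cylp_length_le_1[OF \<mu> sets]
    by (intro nn_integral_linear_combination_le) auto
  also have "\<dots> < \<infinity>"
    by simp
  finally show "(\<integral>\<^sup>+\<omega>. ennreal (norm (F (stake k \<omega>))) \<partial>\<mu>) < \<infinity>" .
qed

subsection \<open>The Bayes mixture\<close>

locale bayes_mixture =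
  fixes M :: "'a::countable stream measure set" and w :: "'a stream measure \<Rightarrow> real"
  assumes countable_M: "countable M"
    and prob_space_M: "\<And>\<nu>. \<nu> \<in> M \<Longrightarrow> prob_space \<nu>"
    and sets_M: "\<And>\<nu>. \<nu> \<in> M \<Longrightarrow> sets \<nu> = sets (stream_space (count_space UNIV))"
    and weight_bounds: "\<And>\<nu>. \<nu> \<in> M \<Longrightarrow> 0 < w \<nu> \<and> w \<nu> \<le> 1"
    and weights_sum_1: "(w has_sum 1) M"
begin

lemma cylp_bounds: "\<nu> \<in> M \<Longrightarrow> 0 \<le> cylp \<nu> x \<and> cylp \<nu> x \<le> 1"
  using prob_space.prob_le_1[OF prob_space_M] by (simp add: cylp_def)

lemma weighted_cylp_nonneg: "\<nu> \<in> M \<Longrightarrow> 0 \<le> w \<nu> * cylp \<nu> x"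
  using cylp_bounds[of \<nu> x] weight_bounds[of \<nu>] by simp

lemma weighted_cylp_summable: "(\<lambda>\<nu>. w \<nu> * cylp \<nu> x) summable_on M"
proof (rule summable_on_comparison_test)
  show "w summable_on M"
    using weights_sum_1 by (rule has_sum_imp_summable)
  fix \<nu> assume "\<nu> \<in> M"
  then show "w \<nu> * cylp \<nu> x \<le> w \<nu>" "0 \<le> w \<nu> * cylp \<nu> x"
    using cylp_bounds[of \<nu> x] weight_bounds[of \<nu>] by (auto simp: mult_left_le)
qed

lemma mixp_nonneg: "0 \<le> mixp M w x"
  unfolding mixp_def using weighted_cylp_nonneg by (intro infsum_nonneg) auto

lemma mixp_ge: "\<nu> \<in> M \<Longrightarrow> w \<nu> * cylp \<nu> x \<le> mixp M w x"
  unfolding mixp_def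
  using infsum_mono_neutral[of "\<lambda>\<nu>. w \<nu> * cylp \<nu> x" "{\<nu>}" "\<lambda>\<nu>. w \<nu> * cylp \<nu> x" M]
    weighted_cylp_nonneg weighted_cylp_summable
  by auto

lemma ennreal_mixp:
  "ennreal (mixp M w x) = (\<integral>\<^sup>+\<nu>. ennreal (w \<nu>) * emeasure \<nu> (cyl x) \<partial>count_space M)"
proof -
  have "ennreal (mixp M w x) = (\<integral>\<^sup>+\<nu>. ennreal (w \<nu> * cylp \<nu> x) \<partial>count_space M)"
    unfolding mixp_def using weighted_cylp_nonneg weighted_cylp_summable
    by (intro nn_integral_count_space_eq_infsum[symmetric]) auto
  also have "\<dots> = (\<integral>\<^sup>+\<nu>. ennreal (w \<nu>) * emeasure \<nu> (cyl x) \<partial>count_space M)"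
  proof (rule nn_integral_cong)
    fix \<nu> assume "\<nu> \<in> space (count_space M)"
    then have "\<nu> \<in> M" by simp
    then show "ennreal (w \<nu> * cylp \<nu> x) = ennreal (w \<nu>) * emeasure \<nu> (cyl x)"
      using weight_bounds[of \<nu>] cylp_bounds[of \<nu> x] emeasure_cyl_eq_cylp[OF prob_space_M]
      by (simp add: ennreal_mult)
  qed
  finally show ?thesis .
qed

lemma nn_integral_mixp_disjoint_cyl_le:
  fixes g :: "'i \<Rightarrow> 'a list"
  assumes I: "countable I"
    and disj: "\<And>i j. i \<in> I \<Longrightarrow> j \<in> I \<Longrightarrow> i \<noteq> j \<Longrightarrow> cyl (g i) \<inter> cyl (g j) = {}"
    and sub: "\<And>i. i \<in> I \<Longrightarrow> cyl (g i) \<subseteq> C" and C: "C \<in> sets (stream_space (count_space UNIV))"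
  shows "(\<integral>\<^sup>+i. ennreal (mixp M w (g i)) \<partial>count_space I)
         \<le> (\<integral>\<^sup>+\<nu>. ennreal (w \<nu>) * emeasure \<nu> C \<partial>count_space M)"
proof -
  have "(\<integral>\<^sup>+i. ennreal (mixp M w (g i)) \<partial>count_space I)
      = (\<integral>\<^sup>+\<nu>. (\<integral>\<^sup>+i. ennreal (w \<nu>) * emeasure \<nu> (cyl (g i)) \<partial>count_space I) \<partial>count_space M)"
    unfolding ennreal_mixp by (rule nn_integral_count_space_nn_integral) (auto simp: countable_M I)
  also have "\<dots> = (\<integral>\<^sup>+\<nu>. ennreal (w \<nu>) * (\<integral>\<^sup>+i. emeasure \<nu> (cyl (g i)) \<partial>count_space I) \<partial>count_space M)"
    by (simp add: nn_integral_cmult)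
  also have "\<dots> \<le> (\<integral>\<^sup>+\<nu>. ennreal (w \<nu>) * emeasure \<nu> C \<partial>count_space M)"
    using nn_integral_emeasure_disjoint_cyl_le[OF sets_M I disj sub] C sets_M
    by (intro nn_integral_mono mult_left_mono) auto
  finally show ?thesis .
qed

lemma nn_integral_mixp_length_le_1: "(\<integral>\<^sup>+x. ennreal (mixp M w x) \<partial>count_space {x. length x = k}) \<le> 1"
proof -
  have "(\<integral>\<^sup>+x. ennreal (mixp M w (id x)) \<partial>count_space {x. length x = k})
      \<le> (\<integral>\<^sup>+\<nu>. ennreal (w \<nu>) * emeasure \<nu> UNIV \<partial>count_space M)"
    using sets.top[of "stream_space (count_space UNIV)"]
    by (intro nn_integral_mixp_disjoint_cyl_le)
       (auto simp: countable_lists_of_length cyl_disjoint space_stream_space)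
  also have "\<dots> = (\<integral>\<^sup>+\<nu>. ennreal (w \<nu>) \<partial>count_space M)"
    using prob_space.emeasure_space_1[OF prob_space_M] sets_eq_imp_space_eq[OF sets_M]
    by (intro nn_integral_cong) (simp add: space_stream_space)
  also have "\<dots> = 1"
    using weight_bounds weights_sum_1
    by (simp add: nn_integral_count_space_eq_infsum has_sum_imp_summable less_imp_le infsumI)
  finally show ?thesis by simp
qed

lemma nn_integral_mixp_snoc_le:
  "(\<integral>\<^sup>+a. ennreal (mixp M w (x @ [a])) \<partial>count_space UNIV) \<le> ennreal (mixp M w x)"
  unfolding ennreal_mixp[of x]
  by (rule nn_integral_mixp_disjoint_cyl_le)
     (auto simp: cyl_disjoint cyl_append_subset sets_cyl)

end

theorem lemma4:
  fixes M :: "('a::countable) stream measure set"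
    and w :: "'a stream measure \<Rightarrow> real"
    and \<mu> :: "'a stream measure"
    and n :: nat
  assumes "countable M"
    and "\<And>\<nu>. \<nu> \<in> M \<Longrightarrow> prob_space \<nu>"
    and "\<And>\<nu>. \<nu> \<in> M \<Longrightarrow> sets \<nu> = sets (stream_space (count_space UNIV))"
    and "\<And>\<nu>. \<nu> \<in> M \<Longrightarrow> 0 < w \<nu> \<and> w \<nu> \<le> 1"
    and "(w has_sum 1) M"
    and "\<mu> \<in> M"
  shows "integrable \<mu> (\<lambda>\<omega>. ln (cylp \<mu> (prefix_lt n \<omega>) / mixp M w (prefix_lt n \<omega>)))
       \<and> integrable \<mu> (\<lambda>\<omega>. dn \<mu> M w n \<omega>)"
proof -
  interpret bayes_mixture M w
    by (rule bayes_mixture.intro) (fact assms)+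
  have \<mu>: "prob_space \<mu>" "sets \<mu> = sets (stream_space (count_space UNIV))" "0 < w \<mu>" "w \<mu> \<le> 1"
    using assms(6) prob_space_M sets_M weight_bounds by auto
  have dom: "w \<mu> * cylp \<mu> x \<le> mixp M w x" for x
    using mixp_ge[OF assms(6)] .
  have C: "0 \<le> - ln (w \<mu>) + 1"
    using ln_le_minus_one[OF \<mu>(3)] \<mu>(4) by linarith
  note criterion = integrable_stake_if_dominated[OF \<mu>(1,2) C mixp_nonneg nn_integral_mixp_length_le_1]
  have "integrable \<mu> (\<lambda>\<omega>. ln (cylp \<mu> (stake (n - 1) \<omega>) / mixp M w (stake (n - 1) \<omega>)))"
    using abs_ln_ratio_mult_le[OF _ \<mu>(3,4) dom] cylp_bounds[OF assms(6)]
    by (intro criterion[where F = "\<lambda>x. ln (cylp \<mu> x / mixp M w x)"]) auto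
  moreover have "integrable \<mu> (\<lambda>\<omega>. cond_kl (cylp \<mu>) (mixp M w) (stake (n - 1) \<omega>))"
    using abs_cond_kl_mult_le[OF _ \<mu>(3,4) dom nn_integral_cylp_snoc_le[OF \<mu>(1,2)]
        nn_integral_mixp_snoc_le] cylp_bounds[OF assms(6)]
    by (intro criterion) auto
  ultimately show ?thesis
    by (simp add: prefix_lt_def dn_eq_cond_kl)
qed

end
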